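(* Let $0\le\alpha<\pi/2$ and let $H\in\mathbb{M}_n(\mathbb{M}_k)$ satisfy $W(H)\subseteq S_\alpha$. Then \[ \left(\frac{\mathrm{tr}\,|\mathrm{det}_1 H|}{k}\right)^k\ge (\cos\alpha)^{nk}|\det H| \quad\text{and}\quad \left(\frac{\mathrm{tr}\,|\mathrm{det}_2 H|}{n}\right)^n\ge (\cos\alpha)^{nk}|\det H|. \]
   Context: $\mathbb{M}_n(\mathbb{M}_k)$ denotes the set of $nk\times nk$ complex matrices partitioned as $H=[H_{i,j}]_{i,j=1}^n$ with each block $H_{i,j}=[h^{i,j}_{l,m}]_{l,m=1}^k$ a $k\times k$ complex matrix. For $1\le l,m\le k$ let $G_{l,m}=[h^{i,j}_{l,m}]_{i,j=1}^n\in\mathbb{M}_n$. The partial determinants are $\mathrm{det}_1 H=[\det G_{l,m}]_{l,m=1}^k\in\mathbb{M}_k$ and $\mathrm{det}_2 H=[\det H_{i,j}]_{i,j=1}^n\in\mathbb{M}_n$. Here, for a matrix $A$, $|A|$ denotes the matrix whose entries are the absolute values of the entries of $A$ (so $\mathrm{tr}|\mathrm{det}_2H|=\sum_i|\det H_{i,i}|$). The numerical range of $A\in\mathbb{M}_p$ is $W(A)=\{x^*Ax: x\in\mathbb{C}^p, x^*x=1\}$, and for $\alpha\in[0,\pi/2)$, $S_\alpha=\{z\in\mathbb{C}: \Re z>0,\ |\Im z|\le (\Re z)\tan\alpha\}$. *)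

theory Defs
  imports "HOL-Analysis.Analysis"
begin

text \<open>Block matrices in M_n(M_k) are represented as square matrices over the
finite index type 'n \<times> 'k: the entry h^{i,j}_{l,m} (block (i,j), entry (l,m)) is
H $ (i,l) $ (j,m).  n = CARD('n), k = CARD('k).\<close>

definition numerical_range :: "complex ^'m ^'m \<Rightarrow> complex set" where
  "numerical_range A =
     {(\<Sum>i\<in>UNIV. \<Sum>j\<in>UNIV. cnj (x $ i) * A $ i $ j * x $ j) | x :: complex ^'m.
        (\<Sum>i\<in>UNIV. cmod (x $ i) ^ 2) = 1}"

definition sector :: "real \<Rightarrow> complex set" where
  "sector \<alpha> = {z. Re z > 0 \<and> \<bar>Im z\<bar> \<le> Re z * tan \<alpha>}"

definition block :: "complex ^('n::finite \<times> 'k::finite) ^('n \<times> 'k) \<Rightarrow> 'n \<Rightarrow> 'n \<Rightarrow> complex ^'k ^'k" where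
  "block H i j = (\<chi> l m. H $ (i,l) $ (j,m))"

definition Gmat :: "complex ^('n::finite \<times> 'k::finite) ^('n \<times> 'k) \<Rightarrow> 'k \<Rightarrow> 'k \<Rightarrow> complex ^'n ^'n" where
  "Gmat H l m = (\<chi> i j. H $ (i,l) $ (j,m))"

definition det1 :: "complex ^('n::finite \<times> 'k::finite) ^('n \<times> 'k) \<Rightarrow> complex ^'k ^'k" where
  "det1 H = (\<chi> l m. det (Gmat H l m))"

definition det2 :: "complex ^('n::finite \<times> 'k::finite) ^('n \<times> 'k) \<Rightarrow> complex ^'n ^'n" where
  "det2 H = (\<chi> i j. det (block H i j))"

definition abs_mat :: "complex ^'m ^'m \<Rightarrow> real ^'m ^'m" where
  "abs_mat A = (\<chi> i j. cmod (A $ i $ j))"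

definition mtrace :: "'a::comm_ring_1 ^'m ^'m \<Rightarrow> 'a" where
  "mtrace A = (\<Sum>i\<in>UNIV. A $ i $ i)"

end

theory Submission
  imports Defs "HOL-Library.Complex_Order"
begin

text \<open>
  The Hermitian part \<open>B = (H + H\<^sup>*) / 2\<close> of \<open>H\<close> is positive definite, and the sector condition
  \<open>\<bar>Im (x\<^sup>* H x)\<bar> \<le> tan \<alpha> Re (x\<^sup>* H x)\<close> gives \<open>B \<le> H B\<^sup>-\<^sup>1 H\<^sup>* \<le> (1 + tan\<^sup>2 \<alpha>) B\<close> in the
  Loewner order. As \<open>det (H B\<^sup>-\<^sup>1 H\<^sup>*) det B = \<bar>det H\<bar>\<^sup>2\<close>, comparing determinants yields
  \<open>cos\<^sup>N \<alpha> \<bar>det H\<bar> \<le> det B \<le> \<bar>det H\<bar>\<close>, \<open>N = nk\<close>. Fischer's inequality bounds \<open>det B\<close> by the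
  product of the determinants of its diagonal blocks, for the partition of the index set
  \<open>{1..n} \<times> {1..k}\<close> by either coordinate. Each such block is the Hermitian part of the
  corresponding (again sectorial) diagonal block of \<open>H\<close>, so its determinant is at most the
  modulus of that block's determinant, a diagonal entry of \<open>det\<^sub>1 H\<close> resp. \<open>det\<^sub>2 H\<close>;
  AM-GM finishes. All determinant inequalities for positive definite \<open>M\<close> rest on the Schur
  complement recursion \<open>det M[P] = det M[P - {t}] \<cdot> w\<^sup>* M w\<close> for principal submatrices, where
  \<open>w\<close> minimises \<open>x\<^sup>* M x\<close> over the vectors supported on \<open>P\<close> with \<open>x\<^sub>t = 1\<close>.
\<close>

lemma mult_if_zero_left: "(if c then y else 0) * (x::'a::mult_zero) = (if c then y * x else 0)"
  by simp

lemma mult_if_zero_right: "(x::'a::mult_zero) * (if c then y else 0) = (if c then x * y else 0)"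
  by simp

lemmas delta_simps = mult_if_zero_left mult_if_zero_right sum.delta sum.delta'

section \<open>Hermitian forms\<close>

definition cinner :: "complex^'m \<Rightarrow> complex^'m \<Rightarrow> complex" where
  "cinner u v = (\<Sum>i\<in>UNIV. cnj (u$i) * v$i)"

definition qform :: "complex^'m^'m \<Rightarrow> complex^'m \<Rightarrow> complex" where
  "qform M x = cinner x (M *v x)"

definition adjoint_mat :: "complex^'m^'m \<Rightarrow> complex^'m^'m" where
  "adjoint_mat M = (\<chi> i j. cnj (M$j$i))"

definition hermitian :: "complex^'m^'m \<Rightarrow> bool" where
  "hermitian M \<longleftrightarrow> adjoint_mat M = M"

definition pos_def :: "complex^'m^'m \<Rightarrow> bool" where
  "pos_def M \<longleftrightarrow> hermitian M \<and> (\<forall>x. x \<noteq> 0 \<longrightarrow> 0 < Re (qform M x))"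

lemma adjoint_mat_adjoint_mat [simp]: "adjoint_mat (adjoint_mat A) = A"
  by (simp add: adjoint_mat_def vec_eq_iff)

lemma adjoint_mat_mat_1 [simp]: "adjoint_mat (mat 1) = mat 1"
  by (simp add: adjoint_mat_def mat_def vec_eq_iff)

lemma cinner_commute: "cinner v u = cnj (cinner u v)"
  by (simp add: cinner_def mult.commute)

lemma cinner_add_left: "cinner (a + b) c = cinner a c + cinner b c"
  by (simp add: cinner_def sum.distrib ring_distribs)

lemma cinner_add_right: "cinner c (a + b) = cinner c a + cinner c b"
  by (simp add: cinner_def sum.distrib ring_distribs)

lemma cinner_diff_left: "cinner (a - b) c = cinner a c - cinner b c"
  by (simp add: cinner_def sum_subtractf ring_distribs)

lemma cinner_diff_right: "cinner c (a - b) = cinner c a - cinner c b"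
  by (simp add: cinner_def sum_subtractf ring_distribs)

lemma cinner_scale_left: "cinner (k *s a) c = cnj k * cinner a c"
  by (simp add: cinner_def sum_distrib_left mult_ac)

lemma cinner_scale_right: "cinner c (k *s a) = k * cinner c a"
  by (simp add: cinner_def sum_distrib_left mult_ac)

lemmas cinner_simps = cinner_add_left cinner_add_right cinner_diff_left cinner_diff_right
  cinner_scale_left cinner_scale_right

lemma cinner_adjoint_mat: "cinner u (M *v v) = cinner (adjoint_mat M *v u) v"
proof -
  have "cinner u (M *v v) = (\<Sum>i\<in>UNIV. \<Sum>j\<in>UNIV. cnj (u$i) * M$i$j * v$j)"
    by (simp add: cinner_def matrix_vector_mult_def sum_distrib_left mult.assoc)
  also have "\<dots> = (\<Sum>j\<in>UNIV. \<Sum>i\<in>UNIV. cnj (u$i) * M$i$j * v$j)"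
    by (rule sum.swap)
  also have "\<dots> = cinner (adjoint_mat M *v u) v"
    by (simp add: cinner_def matrix_vector_mult_def adjoint_mat_def sum_distrib_right
        sum_distrib_left mult_ac)
  finally show ?thesis .
qed

lemma cinner_hermitian: "hermitian M \<Longrightarrow> cinner u (M *v v) = cinner (M *v u) v"
  by (simp add: hermitian_def cinner_adjoint_mat)

lemma qform_expand: "qform A x = (\<Sum>i\<in>UNIV. \<Sum>j\<in>UNIV. cnj (x $ i) * A $ i $ j * x $ j)"
  by (simp add: qform_def cinner_def matrix_vector_mult_def sum_distrib_left mult.assoc)

lemma qform_zero [simp]: "qform M 0 = 0"
  by (simp add: qform_def cinner_def)

lemma qform_scale: "qform M (c *s x) = cnj c * c * qform M x"
  by (simp add: qform_def vector_scalar_commute cinner_simps)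

lemma qform_adjoint_mat: "qform (adjoint_mat A) x = cnj (qform A x)"
  by (metis adjoint_mat_adjoint_mat cinner_adjoint_mat cinner_commute qform_def)

lemma hermitian_qform_real: "hermitian M \<Longrightarrow> Im (qform M x) = 0"
  using qform_adjoint_mat[of M x] by (simp add: hermitian_def complex_eq_iff)

lemma pos_def_qform_nonneg: "pos_def M \<Longrightarrow> 0 \<le> Re (qform M x)"
  by (cases "x = 0") (auto simp: pos_def_def less_imp_le)

lemma pos_def_qform_pos: "pos_def M \<Longrightarrow> x \<noteq> 0 \<Longrightarrow> 0 < qform M x"
  by (simp add: pos_def_def less_complex_def hermitian_qform_real)

lemma qform_scaleR: "qform (c *\<^sub>R M) x = of_real c * qform M x"
  by (simp add: qform_def cinner_def matrix_vector_mult_def scaleR_conv_of_real[where 'a=complex]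
      sum_distrib_left mult_ac)

lemma pos_def_scaleR: "0 < c \<Longrightarrow> pos_def M \<Longrightarrow> pos_def (c *\<^sub>R M)"
  by (simp add: pos_def_def hermitian_def adjoint_mat_def vec_eq_iff qform_scaleR
      scaleR_conv_of_real[where 'a=complex])

lemma adjoint_mat_mult: "adjoint_mat (X ** Y) = adjoint_mat Y ** adjoint_mat X"
  by (simp add: adjoint_mat_def matrix_matrix_mult_def vec_eq_iff mult.commute)

lemma hermitian_congruence: "hermitian X \<Longrightarrow> hermitian (A ** X ** adjoint_mat A)"
  by (simp add: hermitian_def adjoint_mat_mult matrix_mul_assoc)

lemma hermitian_inverse:
  assumes B: "hermitian B" and inv: "B ** Bi = mat 1" "Bi ** B = mat 1"
  shows "hermitian Bi"
proof -
  have "adjoint_mat Bi = (Bi ** B) ** adjoint_mat Bi" using inv by simp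
  also have "\<dots> = Bi ** adjoint_mat (Bi ** B)"
    using B by (simp add: hermitian_def adjoint_mat_mult matrix_mul_assoc)
  finally show ?thesis using inv by (simp add: hermitian_def)
qed

lemma det_adjoint_mat: "det (adjoint_mat A) = cnj (det A)"
proof -
  have "adjoint_mat A = transpose (\<chi> i j. cnj (A$i$j))"
    by (simp add: adjoint_mat_def transpose_def vec_eq_iff)
  moreover have "det (\<chi> i j. cnj (A$i$j)) = cnj (det A)"
    by (simp add: det_def)
  ultimately show ?thesis by (simp only: det_transpose)
qed

lemma det_scaleR_mat: "det (c *\<^sub>R (M::complex^'m^'m)) = of_real c ^ CARD('m) * det M"
proof -
  have "det (\<chi> i. of_real c *s M$i) = (\<Prod>i\<in>(UNIV::'m set). of_real c) * det (\<chi> i. M$i)"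
    by (rule det_rows_mul)
  moreover have "c *\<^sub>R M = (\<chi> i. of_real c *s M$i)"
    by (simp add: vec_eq_iff scaleR_conv_of_real[where 'a=complex])
  ultimately show ?thesis by simp
qed

section \<open>Principal minors of positive definite matrices\<close>

text \<open>Completed by the identity outside \<open>P\<close>, so that the determinant is the principal minor
  of \<open>M\<close> on \<open>P\<close>.\<close>

definition principal_pad :: "complex^'m^'m \<Rightarrow> 'm set \<Rightarrow> complex^'m^'m" where
  "principal_pad M P = (\<chi> i j. if i \<in> P \<and> j \<in> P then M$i$j else if i = j then 1 else 0)"

definition supported_unit :: "'m set \<Rightarrow> 'm \<Rightarrow> complex^'m \<Rightarrow> bool" where
  "supported_unit P t w \<longleftrightarrow> w$t = 1 \<and> (\<forall>i. i \<notin> P \<longrightarrow> w$i = 0)"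

text \<open>For a Schur vector \<open>w\<close>, \<open>qform M w = (M w)\<^sub>t\<close> is the Schur complement of the principal
  block on \<open>P - {t}\<close> in the one on \<open>P\<close>.\<close>

definition schur_vector :: "complex^'m^'m \<Rightarrow> 'm set \<Rightarrow> 'm \<Rightarrow> complex^'m \<Rightarrow> bool" where
  "schur_vector M P t w \<longleftrightarrow> supported_unit P t w \<and> (\<forall>i\<in>P - {t}. (M *v w)$i = 0)"

lemma principal_pad_UNIV [simp]: "principal_pad M UNIV = M"
  by (simp add: principal_pad_def vec_eq_iff)

lemma principal_pad_empty [simp]: "principal_pad M {} = mat 1"
  by (simp add: principal_pad_def vec_eq_iff mat_def)

lemma principal_pad_mult_outside: "i \<notin> P \<Longrightarrow> (principal_pad M P *v y)$i = y$i"
  unfolding principal_pad_def matrix_vector_mult_def by (simp add: delta_simps)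

lemma principal_pad_mult_inside:
  "i \<in> P \<Longrightarrow> \<forall>j. j \<notin> P \<longrightarrow> y$j = 0 \<Longrightarrow> (principal_pad M P *v y)$i = (M *v y)$i"
  unfolding principal_pad_def matrix_vector_mult_def by (auto intro!: sum.cong)

lemma supported_unit_nonzero: "supported_unit P t w \<Longrightarrow> w \<noteq> 0"
  by (auto simp: supported_unit_def)

lemma qform_schur_vector: "schur_vector M P t w \<Longrightarrow> qform M w = (M *v w)$t"
proof -
  assume "schur_vector M P t w"
  then have "qform M w = (\<Sum>i\<in>UNIV. if i = t then (M *v w)$t else 0)"
    unfolding qform_def cinner_def schur_vector_def supported_unit_def by (intro sum.cong) auto
  then show ?thesis by simp
qed

text \<open>Clearing row \<open>t\<close> off the diagonal is a sequence of column operations with the unit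
  column \<open>t\<close>.\<close>

lemma det_unit_column:
  fixes A :: "complex^'m^'m"
  assumes unit: "\<And>i. A$i$t = (if i = t then 1 else 0)"
  shows "det A = det (\<chi> i j. if i = t then (if j = t then 1 else 0) else A$i$j)"
proof -
  define V :: "complex^'m^'m" where
    "V = (\<chi> k j. if k = t then (if j = t then 0 else A$t$j) else 0)"
  have AV: "(A ** V)$i$j = (if i = t \<and> j \<noteq> t then A$t$j else 0)" for i j
    unfolding matrix_matrix_mult_def V_def using unit by (simp add: delta_simps)
  have U: "det (mat 1 - V) = 1"
  proof -
    define u :: "complex^'m" where "u = (\<chi> k. if k = t then 1 else - A$t$k)"
    have "transpose (mat 1 - V) = (\<chi> i j. if j = t then u$i else (mat 1 :: complex^'m^'m)$i$j)"
      by (auto simp: vec_eq_iff V_def u_def transpose_def mat_def)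
    moreover have "det (\<chi> i j. if j = t then u$i else (mat 1 :: complex^'m^'m)$i$j) = u$t"
      using cramer_lemma[where A = "mat 1 :: complex^'m^'m" and x = u and k = t]
      unfolding matrix_vector_mul_lid by simp
    ultimately have "det (transpose (mat 1 - V)) = u$t" by simp
    then show ?thesis by (simp add: u_def)
  qed
  have "A ** (mat 1 - V) = A - A ** V"
    unfolding vec_eq_iff matrix_matrix_mult_def
    by (simp add: right_diff_distrib sum_subtractf mat_def delta_simps)
  also have "\<dots> = (\<chi> i j. if i = t then (if j = t then 1 else 0) else A$i$j)"
    using AV unit by (auto simp: vec_eq_iff)
  finally have "A ** (mat 1 - V) = (\<chi> i j. if i = t then (if j = t then 1 else 0) else A$i$j)" .
  then show ?thesis using U by (metis det_mul mult.right_neutral)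
qed

lemma principal_pad_mult_schur_vector:
  assumes tP: "t \<in> P" and w: "schur_vector M P t w"
  shows "principal_pad M P *v w = qform M w *s (\<chi> i. if i = t then 1 else 0)"
proof (rule vec_eq_iff[THEN iffD2], intro allI)
  fix i
  have supp: "\<And>j. j \<notin> P \<Longrightarrow> w$j = 0" "i \<in> P - {t} \<Longrightarrow> (M *v w)$i = 0"
    using w by (auto simp: schur_vector_def supported_unit_def)
  show "(principal_pad M P *v w)$i = (qform M w *s (\<chi> i. if i = t then 1 else 0))$i"
  proof (cases "i \<in> P")
    case True
    then have "(principal_pad M P *v w)$i = (M *v w)$i"
      using supp(1) by (intro principal_pad_mult_inside) auto
    then show ?thesis using True supp(2) qform_schur_vector[OF w] by auto
  next
    case False
    then show ?thesis using tP supp(1) by (auto simp: principal_pad_mult_outside)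
  qed
qed

lemma det_principal_pad_schur_vector:
  fixes M :: "complex^'m^'m"
  assumes tP: "t \<in> P" and w: "schur_vector M P t w"
  shows "det (principal_pad M P) = det (principal_pad M (P - {t})) * qform M w"
proof -
  define N where "N = principal_pad M P"
  define q where "q = qform M w"
  define e :: "complex^'m" where "e = (\<chi> i. if i = t then 1 else 0)"
  define A where "A = (\<chi> i j. if j = t then e$i else N$i$j)"
  have Ae: "A *v (q *s e) = q *s e"
    unfolding vec_eq_iff A_def matrix_vector_mult_def e_def by (simp add: delta_simps)
  have "det N = det (\<chi> i j. if j = t then (N *v w)$i else N$i$j)"
    using cramer_lemma[where A = N and x = w and k = t] w
    by (simp add: schur_vector_def supported_unit_def)
  also have "\<dots> = det (\<chi> i j. if j = t then (A *v (q *s e))$i else A$i$j)"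
    unfolding Ae N_def principal_pad_mult_schur_vector[OF tP w]
    by (rule arg_cong[where f = det]) (simp add: vec_eq_iff A_def N_def e_def q_def)
  also have "\<dots> = q * det A"
    using cramer_lemma[where A = A and x = "q *s e" and k = t] by (simp add: e_def)
  also have "det A = det (\<chi> i j. if i = t then (if j = t then 1 else 0) else A$i$j)"
    by (rule det_unit_column) (simp add: A_def e_def)
  also have "(\<chi> i j. if i = t then (if j = t then 1 else 0) else A$i$j) = principal_pad M (P - {t})"
    by (auto simp: vec_eq_iff A_def e_def N_def principal_pad_def)
  finally show ?thesis by (simp add: N_def q_def)
qed

lemma schur_vector_exists:
  fixes M :: "complex^'m^'m"
  assumes tP: "t \<in> P" and nz: "det (principal_pad M (P - {t})) \<noteq> 0"
  shows "\<exists>w. schur_vector M P t w"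
proof -
  define N where "N = principal_pad M (P - {t})"
  from nz obtain N' where N': "N ** N' = mat 1"
    unfolding N_def invertible_det_nz[symmetric] invertible_def by blast
  define b :: "complex^'m" where "b = (\<chi> i. if i \<in> P - {t} then - M$i$t else 0)"
  define y where "y = N' *v b"
  have Ny: "N *v y = b" unfolding y_def matrix_vector_mul_assoc N' by simp
  have y_supp: "y$i = 0" if i: "i \<notin> P - {t}" for i
  proof -
    have "y$i = (N *v y)$i" unfolding N_def using principal_pad_mult_outside[OF i] by simp
    then show "y$i = 0" using Ny i by (auto simp: b_def)
  qed
  define w :: "complex^'m" where "w = (\<chi> i. if i = t then 1 else y$i)"
  have "supported_unit P t w"
    using y_supp tP by (auto simp: w_def supported_unit_def)
  moreover have "(M *v w)$i = 0" if i: "i \<in> P - {t}" for i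
  proof -
    have "w = y + (\<chi> j. if j = t then 1 else 0)"
      using y_supp by (auto simp: vec_eq_iff w_def)
    then have "(M *v w)$i = (M *v y)$i + M$i$t"
      by (simp add: matrix_vector_mult_def distrib_left sum.distrib delta_simps)
    also have "(M *v y)$i = (N *v y)$i"
      unfolding N_def using principal_pad_mult_inside[OF i, of y M] y_supp by auto
    finally show "(M *v w)$i = 0" using Ny i by (simp add: b_def)
  qed
  ultimately show ?thesis unfolding schur_vector_def by blast
qed

lemma pos_def_principal_minor_pos:
  assumes M: "pos_def M"
  shows "0 < det (principal_pad M P)"
  using finite[of P]
proof (induction P rule: finite_induct)
  case empty
  then show ?case by (simp add: less_complex_def)
next
  case (insert t P)
  have P: "insert t P - {t} = P" using insert by auto
  then obtain w where w: "schur_vector M (insert t P) t w"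
    using schur_vector_exists[of t "insert t P" M] insert.IH by force
  have "0 < qform M w"
    using w M pos_def_qform_pos supported_unit_nonzero unfolding schur_vector_def by blast
  then show ?case
    using det_principal_pad_schur_vector[OF _ w] insert.IH P by (simp add: less_complex_def)
qed

lemma pos_def_schur_vector_exists:
  assumes "pos_def M" "t \<in> P"
  obtains w where "schur_vector M P t w"
proof -
  have "det (principal_pad M (P - {t})) \<noteq> 0"
    using pos_def_principal_minor_pos[OF assms(1), of "P - {t}"] by (auto simp: less_complex_def)
  then show ?thesis using schur_vector_exists[OF assms(2)] that by blast
qed

text \<open>\<open>w - w0\<close> vanishes at \<open>t\<close> and outside \<open>P\<close>, so it is orthogonal to \<open>M w0\<close>; hence
  \<open>qform M w = qform M w0 + qform M (w - w0)\<close>.\<close>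

lemma qform_schur_vector_le:
  assumes M: "pos_def M" and w0: "schur_vector M P t w0" and w: "supported_unit P t w"
  shows "Re (qform M w0) \<le> Re (qform M w)"
proof -
  define d where "d = w - w0"
  have d0: "d$i = 0" if "i \<notin> P - {t}" for i
    using w0 w that by (auto simp: d_def schur_vector_def supported_unit_def)
  have orth: "cinner d (M *v w0) = 0"
    unfolding cinner_def using d0 w0 by (intro sum.neutral) (auto simp: schur_vector_def)
  have herm: "hermitian M" using M by (simp add: pos_def_def)
  have "cinner w0 (M *v d) = cnj (cinner d (M *v w0))"
    by (simp add: cinner_hermitian[OF herm] cinner_commute[of "M *v w0"])
  then have orth': "cinner w0 (M *v d) = 0" using orth by simp
  have "qform M w = qform M w0 + cinner w0 (M *v d) + cinner d (M *v w0) + qform M d"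
    unfolding qform_def d_def by (simp add: matrix_vector_right_distrib cinner_simps
        matrix_vector_mult_diff_distrib)
  then have "qform M w = qform M w0 + qform M d" using orth orth' by simp
  then show ?thesis using pos_def_qform_nonneg[OF M, of d] by simp
qed

lemma det_principal_pad_le_qform:
  assumes M: "pos_def M" and tP: "t \<in> P" and w: "supported_unit P t w"
  shows "Re (det (principal_pad M P)) \<le> Re (det (principal_pad M (P - {t}))) * Re (qform M w)"
proof -
  obtain w0 where w0: "schur_vector M P t w0"
    using pos_def_schur_vector_exists[OF M tP] .
  have minor: "0 < det (principal_pad M (P - {t}))"
    by (rule pos_def_principal_minor_pos[OF M])
  have "0 < qform M w0"
    using w0 M pos_def_qform_pos supported_unit_nonzero unfolding schur_vector_def by blast
  then have "Re (det (principal_pad M P)) = Re (det (principal_pad M (P - {t}))) * Re (qform M w0)"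
    using det_principal_pad_schur_vector[OF tP w0] minor by (simp add: less_complex_def)
  also have "\<dots> \<le> Re (det (principal_pad M (P - {t}))) * Re (qform M w)"
    using qform_schur_vector_le[OF M w0 w] minor by (simp add: less_complex_def)
  finally show ?thesis .
qed

lemma pos_def_det_mono:
  assumes M: "pos_def M" and M': "pos_def M'" and le: "\<And>x. Re (qform M x) \<le> Re (qform M' x)"
  shows "Re (det (principal_pad M P)) \<le> Re (det (principal_pad M' P))"
  using finite[of P]
proof (induction P rule: finite_induct)
  case empty
  then show ?case by simp
next
  case (insert t P)
  have P: "insert t P - {t} = P" using insert by auto
  obtain w where w: "schur_vector M' (insert t P) t w"
    using pos_def_schur_vector_exists[OF M', of t "insert t P"] by blast
  then have w_unit: "supported_unit (insert t P) t w" by (simp add: schur_vector_def)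
  have minor: "0 < det (principal_pad M P)" "0 < det (principal_pad M' P)"
    by (simp_all add: pos_def_principal_minor_pos M M')
  have q: "0 < qform M' w" "0 < qform M w"
    using w_unit M M' pos_def_qform_pos supported_unit_nonzero by blast+
  have "Re (det (principal_pad M (insert t P))) \<le> Re (det (principal_pad M P)) * Re (qform M w)"
    using det_principal_pad_le_qform[OF M _ w_unit] P by simp
  also have "\<dots> \<le> Re (det (principal_pad M P)) * Re (qform M' w)"
    using le[of w] minor by (simp add: less_complex_def)
  also have "\<dots> \<le> Re (det (principal_pad M' P)) * Re (qform M' w)"
    using insert.IH q by (simp add: less_complex_def)
  also have "\<dots> = Re (det (principal_pad M' (insert t P)))"
    using det_principal_pad_schur_vector[OF _ w] P minor q by (simp add: less_complex_def)
  finally show ?case .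
qed

lemma prod_fibres_insert:
  fixes f :: "'m::finite \<Rightarrow> 'c" and F :: "'m set \<Rightarrow> 'a::comm_monoid_mult"
  shows "(\<Prod>c\<in>range f. F (insert t P \<inter> f -` {c}))
    = F (insert t (P \<inter> f -` {f t})) * (\<Prod>c\<in>range f - {f t}. F (P \<inter> f -` {c}))"
proof -
  have "(\<Prod>c\<in>range f. F (insert t P \<inter> f -` {c}))
      = F (insert t P \<inter> f -` {f t}) * (\<Prod>c\<in>range f - {f t}. F (insert t P \<inter> f -` {c}))"
    by (rule prod.remove) auto
  also have "(\<Prod>c\<in>range f - {f t}. F (insert t P \<inter> f -` {c})) = (\<Prod>c\<in>range f - {f t}. F (P \<inter> f -` {c}))"
    by (intro prod.cong refl arg_cong[where f = F]) auto
  also have "insert t P \<inter> f -` {f t} = insert t (P \<inter> f -` {f t})"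
    by auto
  finally show ?thesis .
qed

lemma fischer_inequality:
  fixes f :: "'m::finite \<Rightarrow> 'c"
  assumes M: "pos_def M"
  shows "Re (det (principal_pad M P)) \<le> (\<Prod>c\<in>range f. Re (det (principal_pad M (P \<inter> f -` {c}))))"
  using finite[of P]
proof (induction P rule: finite_induct)
  case empty
  then show ?case by simp
next
  case (insert t P)
  define Q where "Q = P \<inter> f -` {f t}"
  define R where "R = (\<Prod>c\<in>range f - {f t}. Re (det (principal_pad M (P \<inter> f -` {c}))))"
  have prod_P: "(\<Prod>c\<in>range f. Re (det (principal_pad M (P \<inter> f -` {c}))))
      = Re (det (principal_pad M Q)) * R"
    unfolding R_def Q_def by (rule prod.remove) auto
  have prod_insert: "(\<Prod>c\<in>range f. Re (det (principal_pad M (insert t P \<inter> f -` {c}))))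
      = Re (det (principal_pad M (insert t Q))) * R"
    unfolding R_def Q_def by (rule prod_fibres_insert)
  have Q: "insert t Q - {t} = Q" and P: "insert t P - {t} = P"
    using insert by (auto simp: Q_def)
  obtain w where w: "schur_vector M (insert t Q) t w"
    using pos_def_schur_vector_exists[OF M, of t "insert t Q"] by blast
  then have w_unit: "supported_unit (insert t Q) t w" by (simp add: schur_vector_def)
  then have w_unit': "supported_unit (insert t P) t w"
    by (auto simp: supported_unit_def Q_def)
  have q: "0 < qform M w" and minor: "0 < det (principal_pad M Q)"
    using M w_unit pos_def_qform_pos supported_unit_nonzero pos_def_principal_minor_pos by blast+
  have "Re (det (principal_pad M (insert t P))) \<le> Re (det (principal_pad M P)) * Re (qform M w)"
    using det_principal_pad_le_qform[OF M _ w_unit'] P by simp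
  also have "\<dots> \<le> (Re (det (principal_pad M Q)) * R) * Re (qform M w)"
    using insert.IH prod_P q by (simp add: less_complex_def)
  also have "\<dots> = Re (det (principal_pad M (insert t Q))) * R"
    using det_principal_pad_schur_vector[OF _ w] Q q minor by (simp add: less_complex_def)
  finally show ?case using prod_insert by simp
qed

section \<open>Principal submatrices over a smaller index type\<close>

definition principal_submatrix :: "complex^'m^'m \<Rightarrow> ('n \<Rightarrow> 'm) \<Rightarrow> complex^'n^'n" where
  "principal_submatrix M g = (\<chi> i j. M$(g i)$(g j))"

definition extend_by_zero :: "('n \<Rightarrow> 'm) \<Rightarrow> complex^'n \<Rightarrow> complex^'m" where
  "extend_by_zero g x = (\<chi> m. if m \<in> range g then x $ inv g m else 0)"

lemma extend_by_zero_apply: "inj g \<Longrightarrow> extend_by_zero g x $ g i = x $ i"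
  by (simp add: extend_by_zero_def)

lemma extend_by_zero_nonzero: "inj g \<Longrightarrow> x \<noteq> 0 \<Longrightarrow> extend_by_zero g x \<noteq> 0"
  by (metis extend_by_zero_apply vec_eq_iff zero_index)

lemma extend_by_zero_restrict:
  "inj g \<Longrightarrow> (\<And>m. m \<notin> range g \<Longrightarrow> w$m = 0) \<Longrightarrow> extend_by_zero g (\<chi> j. w$(g j)) = w"
  by (auto simp: extend_by_zero_def vec_eq_iff f_inv_into_f)

lemma sum_UNIV_reindex_inj:
  fixes F :: "'m::finite \<Rightarrow> 'a::comm_monoid_add" and g :: "'n::finite \<Rightarrow> 'm"
  assumes "inj g" "\<And>m. m \<notin> range g \<Longrightarrow> F m = 0"
  shows "(\<Sum>m\<in>UNIV. F m) = (\<Sum>i\<in>UNIV. F (g i))"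
proof -
  have "(\<Sum>m\<in>UNIV. F m) = (\<Sum>m\<in>range g. F m)"
    using assms(2) by (intro sum.mono_neutral_right) auto
  also have "\<dots> = (\<Sum>i\<in>UNIV. F (g i))"
    using sum.reindex[OF assms(1), of F] by (simp add: comp_def)
  finally show ?thesis .
qed

lemma principal_submatrix_mult:
  fixes M :: "complex^'m::finite^'m" and g :: "'n::finite \<Rightarrow> 'm"
  assumes g: "inj g"
  shows "(principal_submatrix M g *v x)$i = (M *v extend_by_zero g x)$(g i)"
proof -
  have "(M *v extend_by_zero g x)$(g i) = (\<Sum>m\<in>UNIV. M$(g i)$m * extend_by_zero g x $ m)"
    by (simp add: matrix_vector_mult_def)
  also have "\<dots> = (\<Sum>j\<in>UNIV. M$(g i)$(g j) * x$j)"
    by (subst sum_UNIV_reindex_inj[OF g]) (auto simp: extend_by_zero_def inv_f_f[OF g])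
  finally show ?thesis
    by (simp add: principal_submatrix_def matrix_vector_mult_def)
qed

lemma qform_principal_submatrix:
  fixes A :: "complex^'m::finite^'m" and g :: "'n::finite \<Rightarrow> 'm"
  assumes g: "inj g"
  shows "qform (principal_submatrix A g) x = qform A (extend_by_zero g x)"
proof -
  have "qform A (extend_by_zero g x)
      = (\<Sum>m\<in>UNIV. cnj (extend_by_zero g x $ m) * (A *v extend_by_zero g x) $ m)"
    by (simp add: qform_def cinner_def)
  also have "\<dots> = (\<Sum>i\<in>UNIV. cnj (extend_by_zero g x $ g i) * (A *v extend_by_zero g x) $ g i)"
    by (rule sum_UNIV_reindex_inj[OF g]) (simp add: extend_by_zero_def)
  also have "\<dots> = (\<Sum>i\<in>UNIV. cnj (x $ i) * (principal_submatrix A g *v x) $ i)"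
    by (simp only: extend_by_zero_apply[OF g] principal_submatrix_mult[OF g])
  finally show ?thesis by (simp add: qform_def cinner_def)
qed

lemma det_principal_submatrix:
  fixes M :: "complex^'m::finite^'m" and g :: "'n::finite \<Rightarrow> 'm"
  assumes M: "pos_def M" and g: "inj g"
  shows "det (principal_submatrix M g) = det (principal_pad M (range g))"
proof -
  define S where "S = principal_submatrix M g"
  have "det (principal_pad S Q) = det (principal_pad M (g ` Q))" for Q
    using finite[of Q]
  proof (induction Q rule: finite_induct)
    case empty
    then show ?case by simp
  next
    case (insert t Q)
    have Q: "insert t Q - {t} = Q" using insert by auto
    have gQ: "g ` insert t Q - {g t} = g ` Q" using insert g by (auto simp: inj_eq)
    obtain w where w: "schur_vector M (g ` insert t Q) (g t) w"
      using pos_def_schur_vector_exists[OF M, of "g t" "g ` insert t Q"] by blast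
    define w' where "w' = (\<chi> j. w$(g j))"
    have ext: "extend_by_zero g w' = w"
      unfolding w'_def using w g by (intro extend_by_zero_restrict) (auto simp: schur_vector_def supported_unit_def)
    have Sw': "(S *v w')$i = (M *v w)$(g i)" for i
      using principal_submatrix_mult[OF g, of M w' i] ext by (simp add: S_def)
    have w': "schur_vector S (insert t Q) t w'"
      using w Sw' unfolding schur_vector_def supported_unit_def
      by (auto simp: w'_def inj_image_mem_iff[OF g] inj_eq[OF g])
    have "det (principal_pad S (insert t Q)) = det (principal_pad S Q) * qform S w'"
      using det_principal_pad_schur_vector[OF _ w'] Q by simp
    also have "qform S w' = qform M w"
      using qform_principal_submatrix[OF g, of M w'] ext by (simp add: S_def)
    also have "det (principal_pad S Q) = det (principal_pad M (g ` Q))"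
      by (rule insert.IH)
    also have "det (principal_pad M (g ` Q)) * qform M w = det (principal_pad M (g ` insert t Q))"
      using det_principal_pad_schur_vector[OF _ w] gQ by simp
    finally show ?case .
  qed
  from this[of UNIV] show ?thesis by (simp add: S_def)
qed

section \<open>Sectorial matrices\<close>

definition sectorial :: "real \<Rightarrow> complex^'m^'m \<Rightarrow> bool" where
  "sectorial \<alpha> A \<longleftrightarrow> (\<forall>x. x \<noteq> 0 \<longrightarrow> qform A x \<in> sector \<alpha>)"

definition re_mat :: "complex^'m^'m \<Rightarrow> complex^'m^'m" where
  "re_mat A = (\<chi> i j. (A$i$j + cnj (A$j$i)) / 2)"

definition im_mat :: "complex^'m^'m \<Rightarrow> complex^'m^'m" where
  "im_mat A = (\<chi> i j. (A$i$j - cnj (A$j$i)) / (2 * \<i>))"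

lemma qform_linear_combination:
  "qform (\<chi> i j. c * X$i$j + d * Y$i$j) x = c * qform X x + d * qform Y x"
  unfolding qform_def cinner_def matrix_vector_mult_def
  by (simp add: ring_distribs sum.distrib sum_distrib_left mult_ac)

lemma qform_re_mat: "qform (re_mat A) x = of_real (Re (qform A x))"
proof -
  have "re_mat A = (\<chi> i j. (1/2) * A$i$j + (1/2) * adjoint_mat A $i$j)"
    by (simp add: re_mat_def adjoint_mat_def vec_eq_iff field_simps)
  then have "qform (re_mat A) x = (1/2) * qform A x + (1/2) * cnj (qform A x)"
    by (simp only: qform_linear_combination qform_adjoint_mat)
  then show ?thesis by (simp add: complex_eq_iff)
qed

lemma qform_im_mat: "qform (im_mat A) x = of_real (Im (qform A x))"
proof -
  have "im_mat A = (\<chi> i j. (1/(2*\<i>)) * A$i$j + (-1/(2*\<i>)) * adjoint_mat A $i$j)"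
    by (simp add: im_mat_def adjoint_mat_def vec_eq_iff field_simps)
  then have "qform (im_mat A) x = (1/(2*\<i>)) * qform A x + (-1/(2*\<i>)) * cnj (qform A x)"
    by (simp only: qform_linear_combination qform_adjoint_mat)
  also have "\<dots> = (qform A x - cnj (qform A x)) / (2 * \<i>)"
    by (simp add: field_simps)
  finally show ?thesis
    unfolding complex_diff_cnj by (simp add: complex_eq_iff)
qed

lemma hermitian_re_mat: "hermitian (re_mat A)"
  by (simp add: hermitian_def adjoint_mat_def re_mat_def vec_eq_iff add.commute)

lemma hermitian_im_mat: "hermitian (im_mat A)"
  by (simp add: hermitian_def adjoint_mat_def im_mat_def vec_eq_iff field_simps)

lemma adjoint_mat_mult_vec: "adjoint_mat A *v x = re_mat A *v x - \<i> *s (im_mat A *v x)"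
proof -
  have "adjoint_mat A = (\<chi> i j. re_mat A $i$j - \<i> * im_mat A $i$j)"
    by (simp add: vec_eq_iff adjoint_mat_def re_mat_def im_mat_def field_simps)
  then show ?thesis
    by (simp add: vec_eq_iff matrix_vector_mult_def left_diff_distrib sum_subtractf
        sum_distrib_left mult.assoc)
qed

lemma principal_submatrix_re_mat: "principal_submatrix (re_mat A) g = re_mat (principal_submatrix A g)"
  by (simp add: principal_submatrix_def re_mat_def vec_eq_iff)

lemma sectorial_re_mat_pos_def: "sectorial \<alpha> A \<Longrightarrow> pos_def (re_mat A)"
  by (simp add: pos_def_def sectorial_def sector_def hermitian_re_mat qform_re_mat)

lemma sectorial_im_mat_le:
  "sectorial \<alpha> A \<Longrightarrow> \<bar>Re (qform (im_mat A) x)\<bar> \<le> tan \<alpha> * Re (qform (re_mat A) x)"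
  by (cases "x = 0") (auto simp: sectorial_def sector_def qform_re_mat qform_im_mat mult.commute)

lemma sector_scale: "z \<in> sector \<alpha> \<Longrightarrow> 0 < c \<Longrightarrow> of_real c * z \<in> sector \<alpha>"
  by (simp add: sector_def abs_mult mult.assoc mult_left_mono)

lemma sectorial_of_numerical_range:
  assumes W: "numerical_range A \<subseteq> sector \<alpha>"
  shows "sectorial \<alpha> A"
  unfolding sectorial_def
proof (intro allI impI)
  fix x :: "complex^'a" assume x: "x \<noteq> 0"
  define S where "S = (\<Sum>i\<in>UNIV. cmod (x $ i) ^ 2)"
  have "S \<noteq> 0"
  proof
    assume "S = 0"
    then have "\<forall>i\<in>UNIV. cmod (x $ i) ^ 2 = 0"
      unfolding S_def by (subst (asm) sum_nonneg_eq_0_iff) auto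
    then show False using x by (simp add: vec_eq_iff)
  qed
  then have S: "0 < S" unfolding S_def by (simp add: sum_nonneg order_le_neq_trans)
  define y where "y = of_real (1 / sqrt S) *s x"
  have "(\<Sum>i\<in>UNIV. cmod (y $ i) ^ 2) = 1"
    using S by (simp add: y_def S_def norm_divide power_divide flip: sum_divide_distrib)
  then have "qform A y \<in> sector \<alpha>"
    using W unfolding numerical_range_def qform_expand by blast
  moreover have "qform A x = of_real S * qform A y"
    using S by (simp add: y_def qform_scale flip: of_real_mult)
  ultimately show "qform A x \<in> sector \<alpha>" using S sector_scale by simp
qed

lemma sectorial_principal_submatrix:
  "sectorial \<alpha> A \<Longrightarrow> inj g \<Longrightarrow> sectorial \<alpha> (principal_submatrix A g)"
  by (simp add: sectorial_def qform_principal_submatrix extend_by_zero_nonzero)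

text \<open>With \<open>r\<^sup>2 = Q / (t X)\<close> the bound reads \<open>2 Q \<le> Q + t\<^sup>2 X\<close>.\<close>

lemma le_of_scaled_bounds:
  fixes X Q t :: real
  assumes X: "0 < X" and Q: "0 \<le> Q" and t: "0 \<le> t"
    and bound: "\<And>r. 0 < r \<Longrightarrow> 2 * Q \<le> t * (r^2 * X + Q / r^2)"
  shows "Q \<le> t^2 * X"
proof (cases "Q = 0 \<or> t = 0")
  case True
  then show ?thesis using X t bound[of 1] by auto
next
  case False
  then have "0 < Q" "0 < t" using Q t by auto
  define r where "r = sqrt (Q / (t * X))"
  have "0 < r" "r^2 = Q / (t * X)"
    using \<open>0 < Q\<close> \<open>0 < t\<close> X by (simp_all add: r_def)
  moreover have "t * (Q / (t * X) * X + Q / (Q / (t * X))) = Q + t^2 * X"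
    using \<open>0 < Q\<close> \<open>0 < t\<close> X by (simp add: field_simps power2_eq_square)
  ultimately show ?thesis using bound[of r] by simp
qed

lemma hermitian_polarization_bound:
  assumes C: "hermitian C" and bound: "\<And>z. \<bar>Re (qform C z)\<bar> \<le> t * Re (qform B z)"
    and s: "0 < s"
  shows "2 * Re (cinner x (C *v v)) \<le> t * (s^2 * Re (qform B x) + Re (qform B v) / s^2)"
proof -
  define a where "a = of_real s *s x"
  define b where "b = of_real (1/s) *s v"
  have ab: "cinner a (C *v b) = cinner x (C *v v)"
    using s by (simp add: a_def b_def vector_scalar_commute cinner_simps)
  have ba: "cinner b (C *v a) = cnj (cinner a (C *v b))"
    by (simp add: cinner_hermitian[OF C] cinner_commute[of "C *v b"])
  have "qform C (a + b) - qform C (a - b) = 2 * (cinner a (C *v b) + cinner b (C *v a))"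
    unfolding qform_def
    by (simp add: matrix_vector_right_distrib matrix_vector_mult_diff_distrib cinner_simps
        algebra_simps)
  then have "Re (qform C (a + b) - qform C (a - b)) = 4 * Re (cinner x (C *v v))"
    unfolding ba ab by simp
  then have ineq: "4 * Re (cinner x (C *v v)) \<le> t * (Re (qform B (a + b)) + Re (qform B (a - b)))"
    using bound[of "a + b"] bound[of "a - b"] by (simp add: distrib_left)
  have "qform B (a + b) + qform B (a - b) = 2 * qform B a + 2 * qform B b"
    unfolding qform_def
    by (simp add: matrix_vector_right_distrib matrix_vector_mult_diff_distrib cinner_simps
        algebra_simps)
  then have "Re (qform B (a + b)) + Re (qform B (a - b)) = 2 * Re (qform B a) + 2 * Re (qform B b)"
    by (metis plus_complex.sel(1) Re_complex_of_real mult_2 of_real_numeral)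
  also have "\<dots> = 2 * (s^2 * Re (qform B x) + Re (qform B v) / s^2)"
    using s by (simp add: a_def b_def qform_scale power2_eq_square)
  finally have "4 * Re (cinner x (C *v v)) \<le> 2 * (t * (s^2 * Re (qform B x) + Re (qform B v) / s^2))"
    using ineq by (simp only: mult.left_commute[of t 2])
  then show ?thesis by linarith
qed

text \<open>This is \<open>C B\<^sup>-\<^sup>1 C \<le> t\<^sup>2 B\<close>.\<close>

lemma qform_le_of_hermitian_bound:
  assumes B: "pos_def B" and C: "hermitian C" and t: "0 \<le> t"
    and bound: "\<And>z. \<bar>Re (qform C z)\<bar> \<le> t * Re (qform B z)"
    and v: "B *v v = C *v x"
  shows "Re (qform B v) \<le> t^2 * Re (qform B x)"
proof (cases "x = 0")
  case True
  then show ?thesis using v by (simp add: qform_def cinner_def)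
next
  case False
  have "cinner x (C *v v) = cnj (qform B v)"
    by (simp add: cinner_hermitian[OF C] v[symmetric] qform_def cinner_commute[of v])
  then have xCv: "Re (cinner x (C *v v)) = Re (qform B v)" by simp
  have "Re (qform B v) \<le> t^2 * Re (qform B x)"
  proof (rule le_of_scaled_bounds)
    show "0 < Re (qform B x)" using B False by (simp add: pos_def_def)
    show "0 \<le> Re (qform B v)" by (rule pos_def_qform_nonneg[OF B])
    show "2 * Re (qform B v) \<le> t * (r^2 * Re (qform B x) + Re (qform B v) / r^2)" if "0 < r" for r
      using hermitian_polarization_bound[OF C bound that, of x v] xCv by simp
  qed (rule t)
  then show ?thesis .
qed

lemma qform_congruence_inverse:
  assumes B: "hermitian B" and inv: "B ** Bi = mat 1"
  shows "qform (A ** Bi ** adjoint_mat A) x = qform B (Bi *v (adjoint_mat A *v x))"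
proof -
  define y where "y = Bi *v (adjoint_mat A *v x)"
  have By: "B *v y = adjoint_mat A *v x"
    unfolding y_def matrix_vector_mul_assoc[of B Bi] inv by simp
  have "qform (A ** Bi ** adjoint_mat A) x = cinner x (A *v y)"
    by (simp add: qform_def y_def matrix_vector_mul_assoc matrix_mul_assoc)
  also have "\<dots> = cinner (B *v y) y"
    by (simp add: cinner_adjoint_mat By)
  finally show ?thesis
    by (simp add: qform_def cinner_hermitian[OF B] y_def)
qed

lemma qform_sub_imaginary_shift:
  assumes B: "hermitian B" and C: "hermitian C" and v: "B *v v = C *v x"
  shows "Re (qform B (x - \<i> *s v)) = Re (qform B x) + Re (qform B v)"
proof -
  have "qform B (x - \<i> *s v) = qform B x + qform B v - \<i> * cinner x (B *v v) + \<i> * cinner v (B *v x)"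
    by (simp add: qform_def matrix_vector_mult_diff_distrib vector_scalar_commute cinner_simps
        algebra_simps)
  also have "cinner v (B *v x) = cinner x (B *v v)"
  proof -
    have "cinner v (B *v x) = cnj (qform C x)"
      by (simp add: cinner_hermitian[OF B] v qform_def cinner_commute[of "C *v x"])
    then show ?thesis
      using hermitian_qform_real[OF C, of x] by (simp add: v qform_def complex_eq_iff)
  qed
  finally show ?thesis by simp
qed

text \<open>With \<open>B = re_mat A\<close> and \<open>C = im_mat A\<close> we have \<open>B\<^sup>-\<^sup>1 A\<^sup>* x = x - \<i> v\<close> for
  \<open>v = B\<^sup>-\<^sup>1 C x\<close>, so the middle form is \<open>qform B x + qform B v\<close>, and \<open>qform B v\<close>
  lies between \<open>0\<close> and \<open>tan\<^sup>2 \<alpha> qform B x\<close>.\<close>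

lemma sectorial_loewner_sandwich:
  fixes A :: "complex^'m^'m"
  assumes A: "sectorial \<alpha> A" and \<alpha>: "0 \<le> \<alpha>" "\<alpha> < pi / 2"
    and inv: "re_mat A ** Bi = mat 1" "Bi ** re_mat A = mat 1"
  shows "Re (qform (re_mat A) x) \<le> Re (qform (A ** Bi ** adjoint_mat A) x)"
    and "Re (qform (A ** Bi ** adjoint_mat A) x) \<le> (1 + tan \<alpha> ^ 2) * Re (qform (re_mat A) x)"
proof -
  define B where "B = re_mat A"
  define C where "C = im_mat A"
  have B: "pos_def B" using sectorial_re_mat_pos_def[OF A] by (simp add: B_def)
  have herm: "hermitian B" "hermitian C"
    by (simp_all add: B_def C_def hermitian_re_mat hermitian_im_mat)
  define v where "v = Bi *v (C *v x)"
  have Bv: "B *v v = C *v x"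
    unfolding v_def B_def matrix_vector_mul_assoc[of "re_mat A" Bi] inv(1) by simp
  have y: "Bi *v (adjoint_mat A *v x) = x - \<i> *s v"
    unfolding v_def adjoint_mat_mult_vec matrix_vector_mult_diff_distrib vector_scalar_commute
      matrix_vector_mul_assoc[of Bi "re_mat A"] inv(2) B_def C_def by simp
  have inv_B: "B ** Bi = mat 1" using inv(1) by (simp add: B_def)
  have middle: "Re (qform (A ** Bi ** adjoint_mat A) x) = Re (qform B x) + Re (qform B v)"
    unfolding qform_congruence_inverse[OF herm(1) inv_B] y by (rule qform_sub_imaginary_shift[OF herm Bv])
  have "0 \<le> Re (qform B v)" by (rule pos_def_qform_nonneg[OF B])
  moreover have "Re (qform B v) \<le> tan \<alpha> ^ 2 * Re (qform B x)"
  proof (rule qform_le_of_hermitian_bound[OF B herm(2) _ _ Bv])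
    show "0 \<le> tan \<alpha>"
      using \<alpha> tan_gt_zero[of \<alpha>] by (cases "\<alpha> = 0") auto
    show "\<bar>Re (qform C z)\<bar> \<le> tan \<alpha> * Re (qform B z)" for z
      using sectorial_im_mat_le[OF A] by (simp add: B_def C_def)
  qed
  ultimately show "Re (qform (re_mat A) x) \<le> Re (qform (A ** Bi ** adjoint_mat A) x)"
    and "Re (qform (A ** Bi ** adjoint_mat A) x) \<le> (1 + tan \<alpha> ^ 2) * Re (qform (re_mat A) x)"
    unfolding B_def[symmetric] middle by (simp_all add: distrib_right)
qed

lemma det_congruence_inverse:
  assumes "B ** Bi = mat 1"
  shows "det (A ** Bi ** adjoint_mat A) * det B = of_real (cmod (det A) ^ 2)"
proof -
  have "det B * det Bi = 1" using det_mul[of B Bi] assms by simp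
  then have "det (A ** Bi ** adjoint_mat A) * det B = det A * cnj (det A)"
    by (simp add: det_mul det_adjoint_mat algebra_simps)
  also have "\<dots> = of_real (cmod (det A) ^ 2)"
    by (metis complex_norm_square of_real_power)
  finally show ?thesis .
qed

lemma det_bounds_of_loewner_sandwich:
  fixes B M :: "complex^'m^'m"
  assumes B: "pos_def B" and M: "hermitian M" and c: "0 < c"
    and lower: "\<And>x. Re (qform B x) \<le> Re (qform M x)"
    and upper: "\<And>x. Re (qform M x) \<le> c * Re (qform B x)"
    and product: "det M * det B = of_real (K ^ 2)" and K: "0 \<le> K"
  shows "Re (det B) \<le> K" and "K ^ 2 \<le> c ^ CARD('m) * Re (det B) ^ 2"
proof -
  have "0 < Re (qform M x)" if "x \<noteq> 0" for x
    using B that lower[of x] unfolding pos_def_def by fastforce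
  then have M_pos: "pos_def M" using M by (simp add: pos_def_def)
  have det_B: "0 < det B" and det_M: "0 < det M"
    using pos_def_principal_minor_pos[OF B, of UNIV] pos_def_principal_minor_pos[OF M_pos, of UNIV]
    by simp_all
  then have D: "0 < Re (det B)" by (simp add: less_complex_def)
  have "K ^ 2 = Re (det M * det B)" by (simp add: product)
  also have "\<dots> = Re (det M) * Re (det B)" using det_B det_M by (simp add: less_complex_def)
  finally have K2: "K ^ 2 = Re (det M) * Re (det B)" .
  have "Re (det B) \<le> Re (det M)"
    using pos_def_det_mono[OF B M_pos lower, of UNIV] by simp
  then have "Re (det B) ^ 2 \<le> K ^ 2"
    unfolding K2 using D by (simp add: power2_eq_square mult_right_mono)
  then show "Re (det B) \<le> K" using K by (rule power2_le_imp_le)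
  have "Re (det M) \<le> Re (det (c *\<^sub>R B))"
    using pos_def_det_mono[OF M_pos pos_def_scaleR[OF c B], of UNIV] upper
    by (simp add: qform_scaleR)
  then have "Re (det M) \<le> c ^ CARD('m) * Re (det B)"
    by (simp add: det_scaleR_mat flip: of_real_power)
  then show "K ^ 2 \<le> c ^ CARD('m) * Re (det B) ^ 2"
    unfolding K2 using D by (simp add: power2_eq_square mult_right_mono mult.assoc[symmetric])
qed

lemma sectorial_det_re_mat_bounds:
  fixes A :: "complex^'m^'m"
  assumes A: "sectorial \<alpha> A" and \<alpha>: "0 \<le> \<alpha>" "\<alpha> < pi / 2"
  shows "Re (det (re_mat A)) \<le> cmod (det A)"
    and "cmod (det A) ^ 2 \<le> (1 + tan \<alpha> ^ 2) ^ CARD('m) * Re (det (re_mat A)) ^ 2"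
proof -
  have B: "pos_def (re_mat A)" by (rule sectorial_re_mat_pos_def[OF A])
  then have "det (re_mat A) \<noteq> 0"
    using pos_def_principal_minor_pos[OF B, of UNIV] by (auto simp: less_complex_def)
  then obtain Bi where inv: "re_mat A ** Bi = mat 1" "Bi ** re_mat A = mat 1"
    unfolding invertible_det_nz[symmetric] invertible_def by blast
  have "hermitian Bi"
    using hermitian_inverse[OF hermitian_re_mat inv] .
  then have M: "hermitian (A ** Bi ** adjoint_mat A)" by (rule hermitian_congruence)
  have c: "0 < 1 + tan \<alpha> ^ 2" by (simp add: add_pos_nonneg)
  note bounds = det_bounds_of_loewner_sandwich[OF B M c
      sectorial_loewner_sandwich[OF A \<alpha> inv] det_congruence_inverse[OF inv(1)] norm_ge_zero]
  show "Re (det (re_mat A)) \<le> cmod (det A)" by (rule bounds(1))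
  show "cmod (det A) ^ 2 \<le> (1 + tan \<alpha> ^ 2) ^ CARD('m) * Re (det (re_mat A)) ^ 2" by (rule bounds(2))
qed

lemma sectorial_cos_pow_mult_cmod_det_le:
  fixes A :: "complex^'m^'m"
  assumes A: "sectorial \<alpha> A" and \<alpha>: "0 \<le> \<alpha>" "\<alpha> < pi / 2"
  shows "cos \<alpha> ^ CARD('m) * cmod (det A) \<le> Re (det (re_mat A))"
proof -
  define D where "D = Re (det (re_mat A))"
  have "0 < cos \<alpha>" using \<alpha> by (intro cos_gt_zero_pi) auto
  then have sec: "cos \<alpha> ^ 2 * (1 + tan \<alpha> ^ 2) = 1"
    by (simp add: tan_sec field_simps)
  have "0 \<le> D"
    using pos_def_principal_minor_pos[OF sectorial_re_mat_pos_def[OF A], of UNIV]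
    by (simp add: D_def less_complex_def)
  have "(cos \<alpha> ^ CARD('m) * cmod (det A)) ^ 2 = (cos \<alpha> ^ 2) ^ CARD('m) * cmod (det A) ^ 2"
    by (simp add: power_mult_distrib power_mult[symmetric] mult.commute)
  also have "\<dots> \<le> (cos \<alpha> ^ 2) ^ CARD('m) * ((1 + tan \<alpha> ^ 2) ^ CARD('m) * D ^ 2)"
    using sectorial_det_re_mat_bounds(2)[OF A \<alpha>] by (intro mult_left_mono) (simp_all add: D_def)
  also have "\<dots> = D ^ 2"
    by (simp add: sec mult.assoc[symmetric] flip: power_mult_distrib)
  finally show ?thesis
    using \<open>0 \<le> D\<close> unfolding D_def by (rule power2_le_imp_le)
qed

section \<open>Block-diagonal bounds\<close>

lemma sectorial_cos_pow_mult_cmod_det_le_prod: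
  fixes H :: "complex^'m::finite^'m" and f :: "'m \<Rightarrow> 'c" and g :: "'c \<Rightarrow> 'n::finite \<Rightarrow> 'm"
  assumes H: "sectorial \<alpha> H" and \<alpha>: "0 \<le> \<alpha>" "\<alpha> < pi / 2"
    and g: "\<And>c. inj (g c)" and fibres: "\<And>c. range (g c) = f -` {c}"
  shows "cos \<alpha> ^ CARD('m) * cmod (det H) \<le> (\<Prod>c\<in>range f. cmod (det (principal_submatrix H (g c))))"
proof -
  define B where "B = re_mat H"
  have B: "pos_def B" using sectorial_re_mat_pos_def[OF H] by (simp add: B_def)
  have "cos \<alpha> ^ CARD('m) * cmod (det H) \<le> Re (det B)"
    using sectorial_cos_pow_mult_cmod_det_le[OF H \<alpha>] by (simp add: B_def)
  also have "\<dots> \<le> (\<Prod>c\<in>range f. Re (det (principal_pad B (f -` {c}))))"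
    using fischer_inequality[OF B, of UNIV f] by simp
  also have "\<dots> \<le> (\<Prod>c\<in>range f. cmod (det (principal_submatrix H (g c))))"
  proof (rule prod_mono)
    fix c
    have "det (principal_pad B (f -` {c})) = det (re_mat (principal_submatrix H (g c)))"
      using det_principal_submatrix[OF B g[of c]] by (simp add: fibres B_def principal_submatrix_re_mat)
    then show "0 \<le> Re (det (principal_pad B (f -` {c}))) \<and>
        Re (det (principal_pad B (f -` {c}))) \<le> cmod (det (principal_submatrix H (g c)))"
      using pos_def_principal_minor_pos[OF B, of "f -` {c}"]
        sectorial_det_re_mat_bounds(1)[OF sectorial_principal_submatrix[OF H g] \<alpha>]
      by (simp add: less_complex_def)
  qed
  finally show ?thesis .
qed

lemma prod_le_mean_power:
  fixes a :: "'k::finite \<Rightarrow> real"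
  assumes "\<And>i. 0 \<le> a i"
  shows "(\<Prod>i\<in>UNIV. a i) \<le> ((\<Sum>i\<in>UNIV. a i) / real CARD('k)) ^ CARD('k)"
proof -
  define k where "k = CARD('k)"
  define P where "P = (\<Prod>i\<in>UNIV. a i)"
  have "0 < k" by (simp add: k_def)
  have "0 \<le> P" unfolding P_def using assms by (simp add: prod_nonneg)
  have "P powr (1 / k) \<le> (\<Sum>i\<in>UNIV. a i / k)"
    using arith_geom_mean[of "UNIV :: 'k set" a] assms by (simp add: k_def P_def)
  then have mean: "P powr (1 / k) \<le> (\<Sum>i\<in>UNIV. a i) / k"
    by (simp add: sum_divide_distrib)
  have "(P powr (1 / k)) ^ k = P"
  proof (cases "P = 0")
    case True
    then show ?thesis using \<open>0 < k\<close> by simp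
  next
    case False
    then have "(P powr (1 / k)) ^ k = (P powr (1 / k)) powr k"
      using \<open>0 \<le> P\<close> by (simp add: powr_realpow)
    also have "\<dots> = P" using \<open>0 < k\<close> \<open>0 \<le> P\<close> by (simp add: powr_powr)
    finally show ?thesis .
  qed
  moreover have "(P powr (1 / k)) ^ k \<le> ((\<Sum>i\<in>UNIV. a i) / k) ^ k"
    using mean by (intro power_mono) auto
  ultimately show ?thesis by (simp add: P_def k_def)
qed

lemma principal_submatrix_Gmat: "principal_submatrix H (\<lambda>i. (i, l)) = Gmat H l l"
  by (simp add: principal_submatrix_def Gmat_def)

lemma principal_submatrix_block: "principal_submatrix H (Pair i) = block H i i"
  by (simp add: principal_submatrix_def block_def)

theorem theorem3p7:
  fixes H :: "complex ^('n::finite \<times> 'k::finite) ^('n \<times> 'k)" and \<alpha> :: real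
  assumes "0 \<le> \<alpha>" and "\<alpha> < pi / 2"
    and "numerical_range H \<subseteq> sector \<alpha>"
  shows "(mtrace (abs_mat (det1 H)) / real CARD('k)) ^ CARD('k)
           \<ge> cos \<alpha> ^ (CARD('n) * CARD('k)) * cmod (det H)
         \<and> (mtrace (abs_mat (det2 H)) / real CARD('n)) ^ CARD('n)
           \<ge> cos \<alpha> ^ (CARD('n) * CARD('k)) * cmod (det H)"
proof
  have H: "sectorial \<alpha> H" by (rule sectorial_of_numerical_range[OF assms(3)])
  have card: "CARD('n \<times> 'k) = CARD('n) * CARD('k)"
    by (metis UNIV_Times_UNIV card_cartesian_product)
  have fibres_snd: "range (\<lambda>i. (i, l)) = snd -` {l}" for l :: 'k by auto
  have "cos \<alpha> ^ (CARD('n) * CARD('k)) * cmod (det H) \<le> (\<Prod>l\<in>UNIV. cmod (det (Gmat H l l)))"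
    using sectorial_cos_pow_mult_cmod_det_le_prod[OF H assms(1,2) _ fibres_snd]
    by (simp add: card principal_submatrix_Gmat inj_on_def)
  also have "\<dots> \<le> (mtrace (abs_mat (det1 H)) / real CARD('k)) ^ CARD('k)"
    by (simp add: mtrace_def abs_mat_def det1_def prod_le_mean_power)
  finally show "(mtrace (abs_mat (det1 H)) / real CARD('k)) ^ CARD('k)
      \<ge> cos \<alpha> ^ (CARD('n) * CARD('k)) * cmod (det H)" .
  have fibres_fst: "range (Pair i) = fst -` {i}" for i :: 'n by auto
  have "cos \<alpha> ^ (CARD('n) * CARD('k)) * cmod (det H) \<le> (\<Prod>i\<in>UNIV. cmod (det (block H i i)))"
    using sectorial_cos_pow_mult_cmod_det_le_prod[OF H assms(1,2) _ fibres_fst]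
    by (simp add: card principal_submatrix_block inj_on_def)
  also have "\<dots> \<le> (mtrace (abs_mat (det2 H)) / real CARD('n)) ^ CARD('n)"
    by (simp add: mtrace_def abs_mat_def det2_def prod_le_mean_power)
  finally show "(mtrace (abs_mat (det2 H)) / real CARD('n)) ^ CARD('n)
      \<ge> cos \<alpha> ^ (CARD('n) * CARD('k)) * cmod (det H)" .
qed

end
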